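(* Let $n\in\{2,3\}$, $\gamma\in[1,n/2]$, $\gamma(n)=\frac{n(n-1)-n\gamma}{n-\gamma}$, and let $\rho\ge0$ on $\mathbb{R}^n$ satisfy $\|\rho\|_{L^1}+\|\rho\|_{L^\gamma}\le C_0$ if $\gamma>1$, or $\|\rho\|_{L^1}+\|\rho\ln(1+\rho)\|_{L^1}\le C_0$ if $\gamma=1$. Let $\alpha\in(0,1)$ with $\gamma(n)-n+1+\alpha<0$, let $\psi$ be a nonnegative $C^\infty$ function with compact support in $B_R$, and let $$\Omega=\{x\in B_R:\ \mathcal{M}\rho(s,x)\le s^{\gamma(n)+\alpha}\ \text{for } s\ge0\}.$$ Then $$\|I_1(\psi\rho)\|_{L^p(\Omega)}\le C(\gamma,n,\alpha)\quad\text{with}\quad p=\gamma\frac{\gamma(n)-n+\alpha}{\gamma(n)-n+1+\alpha}>n,$$ where $C(\gamma,n,\alpha)$ depends only on $\gamma,n,\alpha$ (and the bound $C_0$, and $R$).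
   Context: $\mathcal{M}\rho(s,x)=\int_{|x-y|\le s}\rho(y)dy$; $I_1f(x)=\int_{\mathbb{R}^n}|x-y|^{1-n}f(y)dy$; $B_R$ is the ball of radius $R$ centred at $0$. *)

theory Defs
  imports "HOL-Analysis.Analysis"
begin

definition gamma_n :: "real \<Rightarrow> real \<Rightarrow> real" where
  "gamma_n n g = (n * (n - 1) - n * g) / (n - g)"

text \<open>C-infinity (smooth) real-valued functions on a Euclidean space:
  differentiable everywhere, and every directional derivative is again smooth.\<close>
coinductive smooth_fun :: "('a::euclidean_space \<Rightarrow> real) \<Rightarrow> bool" where
  "(\<forall>x. f differentiable (at x)) \<Longrightarrow>
   (\<forall>v. smooth_fun (\<lambda>x. frechet_derivative f (at x) v)) \<Longrightarrow> smooth_fun f"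

definition maxM :: "('a::euclidean_space \<Rightarrow> real) \<Rightarrow> real \<Rightarrow> 'a \<Rightarrow> ennreal" where
  "maxM \<rho> s x = (\<integral>\<^sup>+ y \<in> cball x s. ennreal (\<rho> y) \<partial>lborel)"

definition I1 :: "('a::euclidean_space \<Rightarrow> real) \<Rightarrow> 'a \<Rightarrow> ennreal" where
  "I1 f x = (\<integral>\<^sup>+ y. ennreal (norm (x - y) powr (1 - real DIM('a)) * f y) \<partial>lborel)"

definition Lp_norm_on :: "'a::euclidean_space set \<Rightarrow> real \<Rightarrow> ('a \<Rightarrow> ennreal) \<Rightarrow> ennreal" where
  "Lp_norm_on S p f =
     (let J = (\<integral>\<^sup>+ x \<in> S. ennreal (enn2real (f x) powr p) \<partial>lborel) in
      if (AE x in lborel. x \<in> S \<longrightarrow> f x < \<infinity>) \<and> J < \<infinity>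
      then ennreal (enn2real J powr (1 / p)) else \<infinity>)"

end

theory Submission
  imports Defs
begin

text \<open>
  At a point x of \<Omega>, split I1 \<rho> (x) into the near part (|x - y| < r) and the far part.
  Decomposing the far region into dyadic shells and using the Morrey bound
  M \<rho> (s, x) \<le> s^\<beta>, \<beta> = \<gamma>(n) + \<alpha>, bounds the far part by C r^\<epsilon> with \<epsilon> = \<beta> + 1 - n < 0;
  in the near part the values \<rho> \<le> \<mu> contribute at most c \<mu> r. Choosing r and \<mu> so that
  both terms equal \<lambda>/3 shows that I1 \<rho> (x) \<ge> \<lambda> forces the near potential of the upper
  truncation \<rho> [\<rho> > \<mu>] to be at least \<lambda>/3. Summing over the levels \<lambda> = 2^k with weights
  2^(k p) and integrating with Tonelli (the near potential of g has integral at most c r \<integral> g)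
  bounds \<integral> over \<Omega> of (I1 \<rho>)^p by |B_R| plus the integral of
  \<Sum>k b^(k (\<gamma> - 1)) \<rho> [\<rho> > B b^k], where b = 2^q and p = \<gamma> q. Pointwise this series is at most
  C \<rho>^\<gamma> if \<gamma> > 1 and C (\<rho> + \<rho> ln (1 + \<rho>)) if \<gamma> = 1, which is controlled by C0.
  Finally \<psi> is bounded.
\<close>

lemma exists_dyadic_bracket:
  fixes x :: real assumes "1 \<le> x"
  shows "\<exists>j::nat. 2 powr real j \<le> x \<and> x < 2 powr (real j + 1)"
proof -
  define m where "m = floor (log 2 x)"
  have m0: "0 \<le> m" unfolding m_def using assms by simp
  have "real_of_int m \<le> log 2 x" "log 2 x < real_of_int m + 1" unfolding m_def by linarith+
  hence "2 powr real_of_int m \<le> 2 powr log 2 x" "2 powr log 2 x < 2 powr (real_of_int m + 1)"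
    by (auto intro: powr_mono powr_less_mono)
  moreover have "2 powr log 2 x = x" using assms by simp
  moreover have "real (nat m) = real_of_int m" using m0 by simp
  ultimately show ?thesis by (intro exI[of _ "nat m"]) auto
qed

lemma ennreal_le_suminf:
  fixes f :: "nat \<Rightarrow> ennreal"
  shows "f j \<le> (\<Sum>i. f i)"
  using sum_le_suminf[OF summableI, of "{j}" f] by simp

lemma powr_le_dyadic_near_shells:
  fixes e r d :: real assumes e: "e \<le> 0" and r: "0 < r" and d: "0 \<le> d"
  shows "ennreal (d powr e * indicator {..<r} d)
    \<le> (\<Sum>j. ennreal ((r * 2 powr (-(real j+1))) powr e) * indicator {..r * 2 powr (-real j)} d)"
proof (cases "d = 0 \<or> r \<le> d")
  case True thus ?thesis by (auto simp: indicator_def)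
next
  case False
  hence d0: "0 < d" and dr: "d < r" using d by auto
  obtain j :: nat where j1: "2 powr real j \<le> r / d" and j2: "r / d < 2 powr (real j + 1)"
    using exists_dyadic_bracket[of "r/d"] d0 dr by auto
  have p1: "2 powr (-real j) = 1 / 2 powr real j" "2 powr (-(real j + 1)) = 1 / 2 powr (real j + 1)"
    by (simp_all add: powr_minus_divide del: minus_add_distrib)
  have a: "r * 2 powr (-(real j+1)) < d" using j2 d0 unfolding p1 by (simp add: field_simps)
  have b: "d \<le> r * 2 powr (-real j)" using j1 d0 unfolding p1 by (simp add: field_simps)
  have "d powr e \<le> (r * 2 powr (-(real j+1))) powr e"
    using powr_mono2'[OF e] a r by simp
  hence "ennreal (d powr e * indicator {..<r} d)
      \<le> ennreal ((r * 2 powr (-(real j+1))) powr e) * indicator {..r * 2 powr (-real j)} d"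
    using dr b by (auto simp: indicator_def intro: ennreal_leI)
  also have "\<dots> \<le> (\<Sum>j. ennreal ((r * 2 powr (-(real j+1))) powr e) * indicator {..r * 2 powr (-real j)} d)"
    by (rule ennreal_le_suminf)
  finally show ?thesis .
qed

lemma powr_le_dyadic_far_shells:
  fixes e r d :: real assumes e: "e \<le> 0" and r: "0 < r"
  shows "ennreal (d powr e * indicator {r..} d)
    \<le> (\<Sum>j. ennreal ((r * 2 powr (real j)) powr e) * indicator {..r * 2 powr (real j + 1)} d)"
proof (cases "r \<le> d")
  case False thus ?thesis by (auto simp: indicator_def)
next
  case True
  obtain j :: nat where j1: "2 powr real j \<le> d / r" and j2: "d / r < 2 powr (real j + 1)"
    using exists_dyadic_bracket[of "d/r"] r True by auto
  have a: "r * 2 powr (real j) \<le> d" using j1 r by (simp add: field_simps)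
  have b: "d \<le> r * 2 powr (real j + 1)" using j2 r by (simp add: field_simps)
  have "d powr e \<le> (r * 2 powr (real j)) powr e"
    using powr_mono2'[OF e] a r by simp
  hence "ennreal (d powr e * indicator {r..} d)
      \<le> ennreal ((r * 2 powr (real j)) powr e) * indicator {..r * 2 powr (real j + 1)} d"
    using True b by (auto simp: indicator_def intro: ennreal_leI)
  also have "\<dots> \<le> (\<Sum>j. ennreal ((r * 2 powr (real j)) powr e) * indicator {..r * 2 powr (real j + 1)} d)"
    by (rule ennreal_le_suminf)
  finally show ?thesis .
qed

definition near_const :: "nat \<Rightarrow> real" where
  "near_const n = unit_ball_vol (real n) * 2 ^ n"

definition far_const :: "nat \<Rightarrow> real \<Rightarrow> real" where
  "far_const n \<beta> = 2 powr \<beta> / (1 - 2 powr (\<beta> + 1 - real n))"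

lemma near_const_pos: "0 < near_const n"
  by (simp add: near_const_def)

lemma far_const_pos: "\<beta> + 1 - real n < 0 \<Longrightarrow> 0 < far_const n \<beta>"
  by (simp add: far_const_def powr_less_one)

lemma suminf_ennreal_geometric:
  fixes c x :: real assumes "0 \<le> c" and "0 \<le> x" and "x < 1"
  shows "(\<Sum>j. ennreal (c * x ^ j)) = ennreal (c / (1 - x))"
proof -
  have "(\<Sum>j. ennreal (c * x ^ j)) = ennreal (\<Sum>j. c * x ^ j)"
    using assms by (intro suminf_ennreal2) (auto intro!: summable_mult summable_geometric)
  also have "(\<Sum>j. c * x ^ j) = c / (1 - x)"
    using assms by (subst suminf_mult) (auto simp: suminf_geometric summable_geometric)
  finally show ?thesis .
qed

lemma nn_integral_kernel_ball_le:
  fixes z :: "'a::euclidean_space" and r :: real assumes r: "0 < r"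
  shows "(\<integral>\<^sup>+x. ennreal (norm (x - z) powr (1 - real DIM('a)) * indicator {..<r} (norm (x - z))) \<partial>lborel)
     \<le> ennreal (near_const DIM('a) * r)"
proof -
  define n where "n = real DIM('a)"
  define e where "e = 1 - n"
  have e: "e \<le> 0" unfolding e_def n_def by (simp add: DIM_positive Suc_leI)
  define V where "V = unit_ball_vol n"
  have V0: "0 \<le> V" unfolding V_def n_def by simp
  define a where "a j = (r * 2 powr (-(real j+1))) powr e" for j :: nat
  define s where "s j = r * 2 powr (-real j)" for j :: nat
  have s0: "0 < s j" for j unfolding s_def using r by simp
  have "(\<integral>\<^sup>+x. ennreal (norm (x - z) powr e * indicator {..<r} (norm (x - z))) \<partial>lborel)
      \<le> (\<integral>\<^sup>+x. (\<Sum>j. ennreal (a j) * indicator (cball z (s j)) x) \<partial>lborel)"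
  proof (rule nn_integral_mono)
    fix x :: 'a
    have "indicator {..s j} (norm (x - z)) = (indicator (cball z (s j)) x :: ennreal)" for j
      by (simp add: indicator_def dist_norm norm_minus_commute)
    thus "ennreal (norm (x - z) powr e * indicator {..<r} (norm (x - z)))
        \<le> (\<Sum>j. ennreal (a j) * indicator (cball z (s j)) x)"
      using powr_le_dyadic_near_shells[OF e r, of "norm (x - z)"] unfolding a_def s_def by simp
  qed
  also have "\<dots> = (\<Sum>j. ennreal (a j) * emeasure lborel (cball z (s j)))"
    by (subst nn_integral_suminf) (auto simp: nn_integral_cmult_indicator intro!: borel_measurable_times_ennreal borel_measurable_indicator)
  also have "\<dots> = (\<Sum>j. ennreal (V * r * 2 powr (n - 1) * (1/2)^j))"
  proof (rule suminf_cong)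
    fix j
    have "a j * (V * s j ^ DIM('a)) = V * (r powr e * r powr n) * (2 powr (-(real j+1) * e) * 2 powr (-real j * n))"
      using s0[of j] r unfolding a_def s_def n_def
      by (simp add: powr_realpow[symmetric] powr_mult powr_powr ac_simps)
    also have "\<dots> = V * r * 2 powr ((n - 1) + (- real j))"
      using r unfolding e_def by (simp add: powr_add[symmetric] algebra_simps)
    also have "\<dots> = V * r * 2 powr (n - 1) * (1/2)^j"
      by (simp add: powr_diff powr_realpow power_one_over)
    finally have eq: "a j * (V * s j ^ DIM('a)) = V * r * 2 powr (n - 1) * (1/2)^j" .
    have "ennreal (a j) * emeasure lborel (cball z (s j)) = ennreal (a j * (V * s j ^ DIM('a)))"
      using s0[of j] V0 unfolding V_def n_def a_def by (simp add: emeasure_cball ennreal_mult)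
    thus "ennreal (a j) * emeasure lborel (cball z (s j)) = ennreal (V * r * 2 powr (n - 1) * (1/2)^j)"
      unfolding eq .
  qed
  also have "\<dots> = ennreal (V * r * 2 powr (n - 1) / (1 - 1/2))"
    using V0 r by (intro suminf_ennreal_geometric) auto
  also have "V * r * 2 powr (n - 1) / (1 - 1/2) = near_const DIM('a) * r"
    unfolding near_const_def V_def n_def
    by (simp add: powr_diff powr_realpow[symmetric])
  finally show ?thesis unfolding e_def n_def .
qed

definition morrey_set :: "('a::euclidean_space \<Rightarrow> real) \<Rightarrow> real \<Rightarrow> 'a set" where
  "morrey_set \<rho> \<beta> = {x. \<forall>s\<ge>0. maxM \<rho> s x \<le> ennreal (s powr \<beta>)}"

lemma far_part_le_morrey:
  fixes x :: "'a::euclidean_space" and \<rho> :: "'a \<Rightarrow> real" and \<beta> r :: real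
  assumes rho: "\<rho> \<in> borel_measurable lborel" and nn: "\<forall>y. 0 \<le> \<rho> y"
    and r: "0 < r" and eps: "\<beta> + 1 - real DIM('a) < 0" and x: "x \<in> morrey_set \<rho> \<beta>"
  shows "(\<integral>\<^sup>+y. ennreal (norm (x - y) powr (1 - real DIM('a)) * indicator {r..} (norm (x - y)) * \<rho> y) \<partial>lborel)
    \<le> ennreal (far_const DIM('a) \<beta> * r powr (\<beta> + 1 - real DIM('a)))"
proof -
  define e where "e = 1 - real DIM('a)"
  define \<epsilon> where "\<epsilon> = \<beta> + 1 - real DIM('a)"
  have e: "e \<le> 0" unfolding e_def by (simp add: DIM_positive Suc_leI)
  have eps1: "2 powr \<epsilon> < 1" using eps unfolding \<epsilon>_def by (simp add: powr_less_one)
  define a where "a j = (r * 2 powr (real j)) powr e" for j :: nat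
  define s where "s j = r * 2 powr (real j + 1)" for j :: nat
  have s0: "0 < s j" for j unfolding s_def using r by simp
  have "(\<integral>\<^sup>+y. ennreal (norm (x - y) powr e * indicator {r..} (norm (x - y)) * \<rho> y) \<partial>lborel)
      \<le> (\<integral>\<^sup>+y. (\<Sum>j. ennreal (a j) * (ennreal (\<rho> y) * indicator (cball x (s j)) y)) \<partial>lborel)"
  proof (rule nn_integral_mono)
    fix y :: 'a
    have ind: "indicator {..s j} (norm (x - y)) = (indicator (cball x (s j)) y :: ennreal)" for j
      by (simp add: indicator_def dist_norm)
    have "ennreal (norm (x - y) powr e * indicator {r..} (norm (x - y)) * \<rho> y)
       = ennreal (norm (x - y) powr e * indicator {r..} (norm (x - y))) * ennreal (\<rho> y)"
      using nn by (simp add: ennreal_mult)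
    also have "\<dots> \<le> (\<Sum>j. ennreal (a j) * indicator (cball x (s j)) y) * ennreal (\<rho> y)"
      using powr_le_dyadic_far_shells[OF e r, of "norm (x - y)"] unfolding a_def s_def ind[unfolded s_def]
      by (intro mult_right_mono) auto
    finally show "ennreal (norm (x - y) powr e * indicator {r..} (norm (x - y)) * \<rho> y)
        \<le> (\<Sum>j. ennreal (a j) * (ennreal (\<rho> y) * indicator (cball x (s j)) y))"
      by (simp add: ac_simps)
  qed
  also have "\<dots> = (\<Sum>j. ennreal (a j) * maxM \<rho> (s j) x)"
    using rho unfolding maxM_def
    by (subst nn_integral_suminf) (auto intro!: suminf_cong nn_integral_cmult borel_measurable_times_ennreal borel_measurable_indicator)
  also have "\<dots> \<le> (\<Sum>j. ennreal (a j) * ennreal (s j powr \<beta>))"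
    using x s0 unfolding morrey_set_def by (intro suminf_le mult_left_mono) (auto simp: less_imp_le)
  also have "\<dots> = (\<Sum>j. ennreal (r powr \<epsilon> * 2 powr \<beta> * (2 powr \<epsilon>)^j))"
  proof (rule suminf_cong)
    fix j
    have "a j * s j powr \<beta> = r powr e * 2 powr (real j * e) * (r powr \<beta> * 2 powr ((real j + 1) * \<beta>))"
      unfolding a_def s_def using r by (simp add: powr_mult powr_powr)
    also have "\<dots> = r powr (e + \<beta>) * 2 powr (real j * (e + \<beta>) + \<beta>)"
      by (simp add: powr_add algebra_simps)
    also have "e + \<beta> = \<epsilon>" unfolding e_def \<epsilon>_def by simp
    also have "2 powr (real j * \<epsilon> + \<beta>) = 2 powr \<beta> * (2 powr \<epsilon>)^j"
      by (simp add: powr_add powr_power mult.commute)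
    finally have eq: "a j * s j powr \<beta> = r powr \<epsilon> * 2 powr \<beta> * (2 powr \<epsilon>)^j" by simp
    show "ennreal (a j) * ennreal (s j powr \<beta>) = ennreal (r powr \<epsilon> * 2 powr \<beta> * (2 powr \<epsilon>)^j)"
      using eq by (simp add: ennreal_mult[symmetric] a_def)
  qed
  also have "\<dots> = ennreal (r powr \<epsilon> * 2 powr \<beta> / (1 - 2 powr \<epsilon>))"
    using eps1 by (intro suminf_ennreal_geometric) auto
  also have "r powr \<epsilon> * 2 powr \<beta> / (1 - 2 powr \<epsilon>) = far_const DIM('a) \<beta> * r powr \<epsilon>"
    unfolding far_const_def \<epsilon>_def by simp
  finally show ?thesis unfolding e_def \<epsilon>_def .
qed

definition upper_truncation :: "('a \<Rightarrow> real) \<Rightarrow> real \<Rightarrow> 'a \<Rightarrow> real" where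
  "upper_truncation \<rho> \<mu> y = \<rho> y * indicator {\<mu><..} (\<rho> y)"

lemma upper_truncation_nonneg: "\<forall>y. 0 \<le> \<rho> y \<Longrightarrow> 0 \<le> upper_truncation \<rho> \<mu> y"
  by (simp add: upper_truncation_def)

lemma borel_measurable_upper_truncation [measurable (raw)]:
  assumes [measurable]: "\<rho> \<in> borel_measurable M"
  shows "upper_truncation \<rho> \<mu> \<in> borel_measurable M"
  unfolding upper_truncation_def by measurable

definition near_potential :: "('a::euclidean_space \<Rightarrow> real) \<Rightarrow> real \<Rightarrow> 'a \<Rightarrow> ennreal" where
  "near_potential g r x =
     (\<integral>\<^sup>+y. ennreal (norm (x - y) powr (1 - real DIM('a)) * indicator {..<r} (norm (x - y)) * g y) \<partial>lborel)"

lemma borel_measurable_near_potential [measurable (raw)]: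
  fixes g :: "'a::euclidean_space \<Rightarrow> real"
  assumes [measurable]: "g \<in> borel_measurable borel"
  shows "near_potential g r \<in> borel_measurable borel"
proof -
  have "(\<lambda>(x, y). ennreal (norm (x - y) powr (1 - real DIM('a)) * indicator {..<r} (norm (x - y)) * g y))
     \<in> borel_measurable (lborel \<Otimes>\<^sub>M (lborel :: 'a measure))"
    by measurable
  from lborel.borel_measurable_nn_integral[OF this] show ?thesis
    unfolding near_potential_def by simp
qed

lemma nn_integral_near_potential_le:
  fixes g :: "'a::euclidean_space \<Rightarrow> real" and r :: real
  assumes [measurable]: "g \<in> borel_measurable borel" and gnn: "\<forall>y. 0 \<le> g y" and r: "0 < r"
  shows "(\<integral>\<^sup>+x. near_potential g r x \<partial>lborel) \<le> ennreal (near_const DIM('a) * r) * (\<integral>\<^sup>+y. ennreal (g y) \<partial>lborel)"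
proof -
  define k where "k x y = ennreal (norm (x - y) powr (1 - real DIM('a)) * indicator {..<r} (norm (x - y)))"
    for x y :: 'a
  have "(\<integral>\<^sup>+x. near_potential g r x \<partial>lborel) = (\<integral>\<^sup>+x. (\<integral>\<^sup>+y. ennreal (g y) * k x y \<partial>lborel) \<partial>lborel)"
    unfolding near_potential_def k_def using gnn
    by (intro nn_integral_cong) (simp add: ennreal_mult[symmetric] ac_simps)
  also have "\<dots> = (\<integral>\<^sup>+y. (\<integral>\<^sup>+x. ennreal (g y) * k x y \<partial>lborel) \<partial>lborel)"
    unfolding k_def by (intro lborel_pair.Fubini') measurable
  also have "\<dots> = (\<integral>\<^sup>+y. ennreal (g y) * (\<integral>\<^sup>+x. k x y \<partial>lborel) \<partial>lborel)"
    unfolding k_def by (intro nn_integral_cong nn_integral_cmult) measurable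
  also have "\<dots> \<le> (\<integral>\<^sup>+y. ennreal (g y) * ennreal (near_const DIM('a) * r) \<partial>lborel)"
    unfolding k_def using nn_integral_kernel_ball_le[OF r]
    by (intro nn_integral_mono mult_left_mono) auto
  also have "\<dots> = ennreal (near_const DIM('a) * r) * (\<integral>\<^sup>+y. ennreal (g y) \<partial>lborel)"
    by (subst nn_integral_multc) (auto simp: mult.commute)
  finally show ?thesis .
qed

lemma I1_le_near_plus_far:
  fixes x :: "'a::euclidean_space" and \<rho> :: "'a \<Rightarrow> real" and \<beta> r \<mu> :: real
  assumes rho: "\<rho> \<in> borel_measurable lborel" and nn: "\<forall>y. 0 \<le> \<rho> y"
    and r: "0 < r" and mu: "0 \<le> \<mu>" and eps: "\<beta> + 1 - real DIM('a) < 0"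
    and x: "x \<in> morrey_set \<rho> \<beta>"
  shows "I1 \<rho> x \<le> near_potential (upper_truncation \<rho> \<mu>) r x + ennreal (\<mu> * (near_const DIM('a) * r))
     + ennreal (far_const DIM('a) \<beta> * r powr (\<beta> + 1 - real DIM('a)))"
proof -
  define k where "k y = norm (x - y) powr (1 - real DIM('a))" for y
  define A where "A y = k y * indicator {..<r} (norm (x - y)) * upper_truncation \<rho> \<mu> y" for y
  define B where "B y = k y * indicator {..<r} (norm (x - y))" for y
  define C where "C y = k y * indicator {r..} (norm (x - y)) * \<rho> y" for y
  have A0: "0 \<le> A y" and B0: "0 \<le> B y" and C0: "0 \<le> C y" for y
    unfolding A_def B_def C_def k_def upper_truncation_def using nn by (auto simp: indicator_def)
  have split: "ennreal (k y * \<rho> y) \<le> ennreal (A y) + ennreal \<mu> * ennreal (B y) + ennreal (C y)" for y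
  proof -
    have "\<rho> y \<le> upper_truncation \<rho> \<mu> y + \<mu>"
      using mu nn by (auto simp: indicator_def upper_truncation_def)
    hence "k y * \<rho> y \<le> k y * (upper_truncation \<rho> \<mu> y + \<mu>)"
      unfolding k_def by (rule mult_left_mono) simp
    hence "k y * \<rho> y \<le> A y + \<mu> * B y + C y"
      unfolding A_def B_def C_def by (auto simp: indicator_def algebra_simps)
    hence "ennreal (k y * \<rho> y) \<le> ennreal (A y + \<mu> * B y + C y)" by (rule ennreal_leI)
    thus ?thesis using A0[of y] B0[of y] C0[of y] mu by (simp add: ennreal_plus ennreal_mult)
  qed
  have "I1 \<rho> x \<le> (\<integral>\<^sup>+y. ennreal (A y) + ennreal \<mu> * ennreal (B y) + ennreal (C y) \<partial>lborel)"
    unfolding I1_def k_def[symmetric] using split by (rule nn_integral_mono)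
  also have "\<dots> = (\<integral>\<^sup>+y. ennreal (A y) \<partial>lborel) + ennreal \<mu> * (\<integral>\<^sup>+y. ennreal (B y) \<partial>lborel)
      + (\<integral>\<^sup>+y. ennreal (C y) \<partial>lborel)"
    unfolding A_def B_def C_def k_def using rho
    by (simp add: nn_integral_add nn_integral_cmult)
  also have "\<dots> \<le> near_potential (upper_truncation \<rho> \<mu>) r x + ennreal \<mu> * ennreal (near_const DIM('a) * r)
      + ennreal (far_const DIM('a) \<beta> * r powr (\<beta> + 1 - real DIM('a)))"
  proof (intro add_mono mult_left_mono order_refl)
    show "(\<integral>\<^sup>+y. ennreal (A y) \<partial>lborel) \<le> near_potential (upper_truncation \<rho> \<mu>) r x"
      unfolding A_def k_def near_potential_def by simp
    show "(\<integral>\<^sup>+y. ennreal (B y) \<partial>lborel) \<le> ennreal (near_const DIM('a) * r)"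
      using nn_integral_kernel_ball_le[OF r, of x] unfolding B_def k_def by (simp add: norm_minus_commute)
    show "(\<integral>\<^sup>+y. ennreal (C y) \<partial>lborel) \<le> ennreal (far_const DIM('a) \<beta> * r powr (\<beta> + 1 - real DIM('a)))"
      using far_part_le_morrey[OF rho nn r eps x] unfolding C_def k_def .
  qed simp
  finally show ?thesis using mu r near_const_pos[of "DIM('a)"] by (simp add: ennreal_mult)
qed

text \<open>The far part and the values \<rho> \<le> \<mu> contribute t/3 each, so the near potential of the
  upper truncation must carry the remaining t/3.\<close>

lemma le_I1_imp_le_near_potential:
  fixes x :: "'a::euclidean_space" and \<rho> :: "'a \<Rightarrow> real" and \<beta> t r :: real
  assumes rho: "\<rho> \<in> borel_measurable lborel" and nn: "\<forall>y. 0 \<le> \<rho> y"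
    and eps: "\<beta> + 1 - real DIM('a) < 0" and x: "x \<in> morrey_set \<rho> \<beta>"
    and t: "0 < t" and le: "ennreal t \<le> I1 \<rho> x"
    and r: "0 < r" and far: "far_const DIM('a) \<beta> * r powr (\<beta> + 1 - real DIM('a)) = t / 3"
  shows "ennreal t \<le> 3 * near_potential (upper_truncation \<rho> (t / (3 * near_const DIM('a) * r))) r x"
proof -
  define \<mu> where "\<mu> = t / (3 * near_const DIM('a) * r)"
  define N where "N = near_potential (upper_truncation \<rho> \<mu>) r x"
  have c: "0 < near_const DIM('a)" by (rule near_const_pos)
  have mu: "0 \<le> \<mu>" unfolding \<mu>_def using t c r by simp
  have near: "\<mu> * (near_const DIM('a) * r) = t / 3" unfolding \<mu>_def using c r by simp
  have "ennreal t \<le> N + ennreal (t / 3) + ennreal (t / 3)"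
    using le I1_le_near_plus_far[OF rho nn r mu eps x] unfolding far near N_def by (rule order_trans)
  also have "\<dots> = N + ennreal (2 * t / 3)"
    using t by (simp add: add.assoc flip: ennreal_plus)
  finally have L: "ennreal t \<le> N + ennreal (2 * t / 3)" .
  show ?thesis
  proof (cases N)
    case (real s)
    have "ennreal s + ennreal (2 * t / 3) = ennreal (s + 2 * t / 3)"
      using real t by (intro ennreal_plus[symmetric]) auto
    with L real have "ennreal t \<le> ennreal (s + 2 * t / 3)" by simp
    hence "t \<le> s + 2 * t / 3" by (rule ennreal_le_iff[THEN iffD1, rotated]) (use t real in simp)
    hence "ennreal t \<le> ennreal (3 * s)" by (intro ennreal_leI) simp
    thus ?thesis using real unfolding N_def \<mu>_def by (simp add: ennreal_mult)
  qed (simp add: N_def \<mu>_def)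
qed

lemma AE_I1_finite_on_morrey_set:
  fixes \<rho> :: "'a::euclidean_space \<Rightarrow> real" and \<beta> :: real
  assumes rho: "\<rho> \<in> borel_measurable lborel" and nn: "\<forall>y. 0 \<le> \<rho> y" and int: "integrable lborel \<rho>"
    and eps: "\<beta> + 1 - real DIM('a) < 0"
  shows "AE x in lborel. x \<in> morrey_set \<rho> \<beta> \<longrightarrow> I1 \<rho> x < \<infinity>"
proof -
  have rhoB: "\<rho> \<in> borel_measurable borel" using rho by simp
  have "(\<integral>\<^sup>+y. ennreal (upper_truncation \<rho> 0 y) \<partial>lborel) \<le> (\<integral>\<^sup>+y. ennreal (\<rho> y) \<partial>lborel)"
    using nn by (intro nn_integral_mono ennreal_leI) (auto simp: upper_truncation_def indicator_def)
  also have "\<dots> < \<infinity>"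
    using integrableD(2)[OF int] by (simp add: less_top)
  finally have fin: "(\<integral>\<^sup>+y. ennreal (upper_truncation \<rho> 0 y) \<partial>lborel) < \<infinity>" .
  have "(\<integral>\<^sup>+x. near_potential (upper_truncation \<rho> 0) 1 x \<partial>lborel)
      \<le> ennreal (near_const DIM('a) * 1) * (\<integral>\<^sup>+y. ennreal (upper_truncation \<rho> 0 y) \<partial>lborel)"
    using rhoB nn by (intro nn_integral_near_potential_le) (auto intro: upper_truncation_nonneg)
  also have "\<dots> < \<infinity>" using fin by (simp add: ennreal_mult_less_top)
  finally have "(\<integral>\<^sup>+x. near_potential (upper_truncation \<rho> 0) 1 x \<partial>lborel) < \<infinity>" .
  moreover have "near_potential (upper_truncation \<rho> 0) 1 \<in> borel_measurable lborel"
    using rhoB by simp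
  ultimately have "AE x in lborel. near_potential (upper_truncation \<rho> 0) 1 x \<noteq> \<infinity>"
    by (intro nn_integral_noteq_infinite) auto
  thus ?thesis
  proof (rule eventually_mono, intro impI)
    fix x assume "near_potential (upper_truncation \<rho> 0) 1 x \<noteq> \<infinity>" and x: "x \<in> morrey_set \<rho> \<beta>"
    moreover have "I1 \<rho> x \<le> near_potential (upper_truncation \<rho> 0) 1 x + ennreal (0 * (near_const DIM('a) * 1))
        + ennreal (far_const DIM('a) \<beta> * 1 powr (\<beta> + 1 - real DIM('a)))"
      using I1_le_near_plus_far[OF rho nn zero_less_one order_refl eps x] .
    ultimately show "I1 \<rho> x < \<infinity>" by (simp add: le_less_trans less_top)
  qed
qed

lemma pow_less_iff_less_threshold:
  fixes b w :: real assumes b: "1 < b"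
  obtains K where "\<And>k::nat. b^k < w \<longleftrightarrow> k < K"
proof -
  obtain m where m: "w < b ^ m" using real_arch_pow[OF b] by blast
  define K where "K = (LEAST k. w \<le> b ^ k)"
  have wK: "w \<le> b ^ K" unfolding K_def by (rule LeastI[of _ m]) (use m in simp)
  have "b^k < w \<longleftrightarrow> k < K" for k :: nat
  proof
    assume "b^k < w"
    with wK have "b ^ k < b ^ K" by simp
    thus "k < K" using b by (simp add: power_strict_increasing_iff)
  next
    assume "k < K"
    thus "b^k < w" unfolding K_def using not_less_Least by force
  qed
  thus thesis by (rule that)
qed

lemma sum_powr_pow_below_le:
  fixes b a w :: real assumes b: "1 < b" and a: "0 < a" and w: "0 < w"
  shows "(\<Sum>k. ennreal ((b^k) powr a * indicator {..<w} (b^k))) \<le> ennreal (b powr a / (b powr a - 1) * w powr a)"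
proof -
  obtain K where K: "\<And>k::nat. b^k < w \<longleftrightarrow> k < K" using pow_less_iff_less_threshold[OF b] by blast
  define c where "c = b powr a"
  have c1: "1 < c" unfolding c_def using powr_less_mono[OF a b] b by simp
  have pw: "(b^k) powr a = c ^ k" for k :: nat
    unfolding c_def using b by (simp add: powr_realpow[symmetric] powr_powr powr_power mult.commute)
  have bound: "(\<Sum>k<K. c ^ k) \<le> c / (c - 1) * w powr a"
  proof (cases K)
    case 0 thus ?thesis using c1 w by simp
  next
    case (Suc L)
    have "(b^L) powr a < w powr a" using K[of L] Suc a b by (intro powr_less_mono2) auto
    hence cL: "c ^ L < w powr a" by (simp add: pw)
    have "(\<Sum>k<K. c ^ k) = (c ^ K - 1) / (c - 1)" using c1 by (simp add: geometric_sum)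
    also have "\<dots> \<le> c ^ K / (c - 1)" using c1 by (simp add: divide_right_mono)
    also have "\<dots> = c / (c - 1) * c ^ L" using Suc by simp
    also have "\<dots> \<le> c / (c - 1) * w powr a" using cL c1 by (intro mult_left_mono) auto
    finally show ?thesis .
  qed
  have "(\<Sum>k. ennreal ((b^k) powr a * indicator {..<w} (b^k))) = (\<Sum>k<K. ennreal ((b^k) powr a * indicator {..<w} (b^k)))"
    by (rule suminf_finite) (auto simp: K indicator_def)
  also have "\<dots> = ennreal (\<Sum>k<K. c ^ k)"
    using c1 by (subst sum_ennreal[symmetric]) (auto simp: K indicator_def pw intro!: sum.cong)
  also have "\<dots> \<le> ennreal (c / (c - 1) * w powr a)"
    using bound by (rule ennreal_leI)
  finally show ?thesis unfolding c_def .
qed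

lemma count_pow_below_le:
  fixes b w :: real assumes b: "1 < b" and w: "0 < w"
  shows "(\<Sum>k. ennreal (indicator {..<w} (b^k))) \<le> ennreal (1 + max 0 (ln w / ln b))"
proof -
  obtain K where K: "\<And>k::nat. b^k < w \<longleftrightarrow> k < K" using pow_less_iff_less_threshold[OF b] by blast
  have bound: "real K \<le> 1 + max 0 (ln w / ln b)"
  proof (cases K)
    case (Suc L)
    have "ln (b ^ L) < ln w" using K[of L] Suc b w by (intro ln_less_cancel_iff[THEN iffD2]) auto
    hence "real L < ln w / ln b" using b by (simp add: ln_realpow field_simps)
    thus ?thesis using Suc by simp
  qed simp
  have "(\<Sum>k. ennreal (indicator {..<w} (b^k))) = (\<Sum>k<K. ennreal (indicator {..<w} (b^k)))"
    by (rule suminf_finite) (auto simp: K indicator_def)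
  also have "\<dots> = ennreal (real K)"
    by (auto simp: K indicator_def ennreal_of_nat_eq_real_of_nat)
  also have "\<dots> \<le> ennreal (1 + max 0 (ln w / ln b))"
    using bound by (rule ennreal_leI)
  finally show ?thesis .
qed

definition geometric_level_sum :: "real \<Rightarrow> real \<Rightarrow> real \<Rightarrow> real \<Rightarrow> ennreal" where
  "geometric_level_sum b a B v = (\<Sum>k. ennreal ((b^k) powr a * (v * indicator {B * b^k<..} v)))"

lemma geometric_level_sum_le_powr:
  fixes b a B v :: real assumes b: "1 < b" and a: "0 < a" and B: "0 < B" and v: "0 \<le> v"
  shows "geometric_level_sum b a B v \<le> ennreal (b powr a / (b powr a - 1) * B powr (-a) * v powr (1 + a))"
proof (cases "v = 0")
  case False
  hence v0: "0 < v" using v by simp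
  have "geometric_level_sum b a B v = (\<Sum>k. ennreal v * ennreal ((b^k) powr a * indicator {..<v/B} (b^k)))"
    unfolding geometric_level_sum_def
  proof (rule suminf_cong)
    fix k :: nat
    have "indicator {B * b^k<..} v = (indicator {..<v/B} (b^k) :: real)"
      using B by (auto simp: indicator_def field_simps)
    thus "ennreal ((b^k) powr a * (v * indicator {B * b^k<..} v))
        = ennreal v * ennreal ((b^k) powr a * indicator {..<v/B} (b^k))"
      using v by (simp add: ennreal_mult[symmetric] ac_simps)
  qed
  also have "\<dots> = ennreal v * (\<Sum>k. ennreal ((b^k) powr a * indicator {..<v/B} (b^k)))"
    by (rule ennreal_suminf_cmult)
  also have "\<dots> \<le> ennreal v * ennreal (b powr a / (b powr a - 1) * (v/B) powr a)"
    using v0 B by (intro mult_left_mono sum_powr_pow_below_le b a) auto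
  also have "\<dots> = ennreal (v * (b powr a / (b powr a - 1) * (v/B) powr a))"
  proof (rule ennreal_mult[symmetric])
    have "1 < b powr a" using powr_less_mono[OF a b] b by simp
    thus "0 \<le> b powr a / (b powr a - 1) * (v/B) powr a" by simp
  qed (use v in simp)
  also have "v * (b powr a / (b powr a - 1) * (v/B) powr a) = b powr a / (b powr a - 1) * B powr (-a) * v powr (1 + a)"
    using v0 B by (simp add: powr_divide powr_add powr_minus field_simps)
  finally show ?thesis .
qed (simp add: geometric_level_sum_def)

lemma geometric_level_sum_zero_le:
  fixes b B v :: real assumes b: "1 < b" and B: "0 < B" and v: "0 \<le> v"
  shows "geometric_level_sum b 0 B v \<le> ennreal ((1 + \<bar>ln B\<bar> / ln b) * v + v * ln (1 + v) / ln b)"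
proof (cases "v = 0")
  case False
  hence v0: "0 < v" using v by simp
  have lb: "0 < ln b" using b by simp
  have "geometric_level_sum b 0 B v = (\<Sum>k. ennreal v * ennreal (indicator {..<v/B} (b^k)))"
    unfolding geometric_level_sum_def
  proof (rule suminf_cong)
    fix k :: nat
    have "indicator {B * b^k<..} v = (indicator {..<v/B} (b^k) :: real)"
      using B by (auto simp: indicator_def field_simps)
    thus "ennreal ((b^k) powr 0 * (v * indicator {B * b^k<..} v)) = ennreal v * ennreal (indicator {..<v/B} (b^k))"
      using v b by (simp add: ennreal_mult[symmetric])
  qed
  also have "\<dots> = ennreal v * (\<Sum>k. ennreal (indicator {..<v/B} (b^k)))"
    by (rule ennreal_suminf_cmult)
  also have "\<dots> \<le> ennreal v * ennreal (1 + max 0 (ln (v/B) / ln b))"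
    using v0 B by (intro mult_left_mono count_pow_below_le b) auto
  also have "\<dots> = ennreal (v * (1 + max 0 (ln (v/B) / ln b)))"
    by (rule ennreal_mult[symmetric]) (use v in auto)
  also have "\<dots> \<le> ennreal ((1 + \<bar>ln B\<bar> / ln b) * v + v * ln (1 + v) / ln b)"
  proof (rule ennreal_leI)
    have "ln (v/B) = ln v - ln B" using v0 B by (simp add: ln_div)
    moreover have "ln v \<le> ln (1 + v)" using v0 by simp
    ultimately have "ln (v/B) \<le> ln (1 + v) + \<bar>ln B\<bar>" by linarith
    hence "max 0 (ln (v/B) / ln b) \<le> (ln (1 + v) + \<bar>ln B\<bar>) / ln b"
      using v0 lb by (auto simp: divide_right_mono)
    hence "v * (1 + max 0 (ln (v/B) / ln b)) \<le> v * (1 + (ln (1 + v) + \<bar>ln B\<bar>) / ln b)"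
      using v by (intro mult_left_mono) auto
    thus "v * (1 + max 0 (ln (v/B) / ln b)) \<le> (1 + \<bar>ln B\<bar> / ln b) * v + v * ln (1 + v) / ln b"
      using lb by (simp add: field_simps)
  qed
  finally show ?thesis .
qed (simp add: geometric_level_sum_def)

lemma powr_le_dyadic_level_sum:
  fixes T p :: real and f :: "nat \<Rightarrow> ennreal"
  assumes T: "0 \<le> T" and p: "0 < p"
    and level: "\<And>k. 2 powr real k \<le> T \<Longrightarrow> ennreal (2 powr real k) \<le> f k"
  shows "ennreal (T powr p) \<le> 1 + (\<Sum>k. ennreal (2 powr ((real k + 1) * p - real k)) * f k)"
proof (cases "T \<le> 1")
  case True
  hence "ennreal (T powr p) \<le> 1" using powr_mono2[of p T 1] T p by (simp add: ennreal_leI)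
  also have "\<dots> \<le> 1 + (\<Sum>k. ennreal (2 powr ((real k + 1) * p - real k)) * f k)" by simp
  finally show ?thesis .
next
  case False
  obtain j where j1: "2 powr real j \<le> T" and j2: "T < 2 powr (real j + 1)"
    using exists_dyadic_bracket[of T] False by auto
  have "T powr p \<le> (2 powr (real j + 1)) powr p" using T j2 p by (intro powr_mono2) auto
  also have "\<dots> = 2 powr ((real j + 1) * p - real j) * 2 powr real j"
    by (simp add: powr_powr powr_diff)
  finally have "ennreal (T powr p) \<le> ennreal (2 powr ((real j + 1) * p - real j)) * ennreal (2 powr real j)"
    by (simp add: ennreal_mult[symmetric] ennreal_leI)
  also have "\<dots> \<le> ennreal (2 powr ((real j + 1) * p - real j)) * f j"
    using level[OF j1] by (rule mult_left_mono) simp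
  also have "\<dots> \<le> (\<Sum>k. ennreal (2 powr ((real k + 1) * p - real k)) * f k)"
    by (rule ennreal_le_suminf)
  finally show ?thesis by (simp add: order_trans[OF _ add_increasing])
qed

lemma I1_powr_le_near_potential_sum:
  fixes \<rho> :: "'a::euclidean_space \<Rightarrow> real" and \<beta> p :: real and r :: "nat \<Rightarrow> real"
  assumes rho: "\<rho> \<in> borel_measurable lborel" and nn: "\<forall>y. 0 \<le> \<rho> y"
    and eps: "\<beta> + 1 - real DIM('a) < 0" and p: "0 < p"
    and r: "\<And>k. 0 < r k" and far: "\<And>k. far_const DIM('a) \<beta> * r k powr (\<beta> + 1 - real DIM('a)) = 2 powr real k / 3"
    and x: "x \<in> morrey_set \<rho> \<beta>" and fin: "I1 \<rho> x < \<infinity>"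
  shows "ennreal (enn2real (I1 \<rho> x) powr p) \<le> 1 + (\<Sum>k. ennreal (2 powr ((real k + 1) * p - real k))
           * (3 * near_potential (upper_truncation \<rho> (2 powr real k / (3 * near_const DIM('a) * r k))) (r k) x))"
proof (rule powr_le_dyadic_level_sum[OF enn2real_nonneg p])
  fix k :: nat assume "2 powr real k \<le> enn2real (I1 \<rho> x)"
  hence "ennreal (2 powr real k) \<le> ennreal (enn2real (I1 \<rho> x))" by (rule ennreal_leI)
  also have "\<dots> = I1 \<rho> x" using fin by (simp add: ennreal_enn2real)
  finally show "ennreal (2 powr real k) \<le> 3 * near_potential (upper_truncation \<rho> (2 powr real k / (3 * near_const DIM('a) * r k))) (r k) x"
    by (intro le_I1_imp_le_near_potential[OF rho nn eps x _ _ r far]) auto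
qed

lemma enn2real_powr_le_cmult:
  fixes f g :: ennreal and K p :: real
  assumes le: "f \<le> ennreal K * g" and g: "g < \<infinity>" and K: "0 \<le> K" and p: "0 < p"
  shows "enn2real f powr p \<le> K powr p * enn2real g powr p"
proof -
  have "f \<le> ennreal (K * enn2real g)" using le g K by (simp add: ennreal_mult ennreal_enn2real)
  hence "enn2real f \<le> K * enn2real g" using K by (intro enn2real_leI) auto
  hence "enn2real f powr p \<le> (K * enn2real g) powr p" using p by (intro powr_mono2) auto
  thus ?thesis using K by (simp add: powr_mult)
qed

lemma nn_integral_dominated_powr_le_sum:
  fixes \<rho> :: "'a::euclidean_space \<Rightarrow> real" and F :: "'a \<Rightarrow> ennreal" and \<beta> p K :: real
    and r :: "nat \<Rightarrow> real" and T :: "'a set"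
  assumes rho: "\<rho> \<in> borel_measurable lborel" and nn: "\<forall>y. 0 \<le> \<rho> y" and int: "integrable lborel \<rho>"
    and eps: "\<beta> + 1 - real DIM('a) < 0" and p: "0 < p"
    and r: "\<And>k. 0 < r k" and far: "\<And>k. far_const DIM('a) \<beta> * r k powr (\<beta> + 1 - real DIM('a)) = 2 powr real k / 3"
    and T: "T \<in> sets lborel" and K: "0 \<le> K" and dom: "\<And>x. F x \<le> ennreal K * I1 \<rho> x"
  shows "(\<integral>\<^sup>+x\<in>T \<inter> morrey_set \<rho> \<beta>. ennreal (enn2real (F x) powr p) \<partial>lborel)
    \<le> ennreal (K powr p) * (emeasure lborel T + (\<Sum>k. ennreal (3 * 2 powr ((real k + 1) * p - real k) * (near_const DIM('a) * r k))
          * (\<integral>\<^sup>+y. ennreal (upper_truncation \<rho> (2 powr real k / (3 * near_const DIM('a) * r k)) y) \<partial>lborel)))"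
proof -
  define c where "c k = ennreal (2 powr ((real k + 1) * p - real k))" for k :: nat
  define N where "N k = near_potential (upper_truncation \<rho> (2 powr real k / (3 * near_const DIM('a) * r k))) (r k)"
    for k :: nat
  have rhoB [measurable]: "\<rho> \<in> borel_measurable borel" using rho by simp
  have N [measurable]: "N k \<in> borel_measurable borel" for k unfolding N_def by measurable
  have pointwise: "ennreal (enn2real (F x) powr p) \<le> ennreal (K powr p) * (1 + (\<Sum>k. c k * (3 * N k x)))"
    if x: "x \<in> morrey_set \<rho> \<beta>" and fin: "I1 \<rho> x < \<infinity>" for x
  proof -
    have "ennreal (enn2real (F x) powr p) \<le> ennreal (K powr p * enn2real (I1 \<rho> x) powr p)"
      using enn2real_powr_le_cmult[OF dom fin K p] by (rule ennreal_leI)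
    also have "\<dots> = ennreal (K powr p) * ennreal (enn2real (I1 \<rho> x) powr p)"
      by (simp add: ennreal_mult)
    also have "\<dots> \<le> ennreal (K powr p) * (1 + (\<Sum>k. c k * (3 * N k x)))"
      unfolding c_def N_def using I1_powr_le_near_potential_sum[OF rho nn eps p r far x fin]
      by (rule mult_left_mono) simp
    finally show ?thesis .
  qed
  have "(\<integral>\<^sup>+x\<in>T \<inter> morrey_set \<rho> \<beta>. ennreal (enn2real (F x) powr p) \<partial>lborel)
      \<le> (\<integral>\<^sup>+x. ennreal (K powr p) * (indicator T x + (\<Sum>k. c k * (3 * N k x))) \<partial>lborel)"
  proof (rule nn_integral_mono_AE)
    show "AE x in lborel. ennreal (enn2real (F x) powr p) * indicator (T \<inter> morrey_set \<rho> \<beta>) x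
        \<le> ennreal (K powr p) * (indicator T x + (\<Sum>k. c k * (3 * N k x)))"
      using AE_I1_finite_on_morrey_set[OF rho nn int eps]
      by eventually_elim (auto simp: indicator_def intro: pointwise)
  qed
  also have "\<dots> = ennreal (K powr p) * (emeasure lborel T + (\<Sum>k. c k * 3 * (\<integral>\<^sup>+x. N k x \<partial>lborel)))"
    using T by (simp add: nn_integral_add nn_integral_suminf nn_integral_cmult mult.assoc)
  also have "\<dots> \<le> ennreal (K powr p) * (emeasure lborel T + (\<Sum>k. c k * 3 * (ennreal (near_const DIM('a) * r k)
      * (\<integral>\<^sup>+y. ennreal (upper_truncation \<rho> (2 powr real k / (3 * near_const DIM('a) * r k)) y) \<partial>lborel))))"
    unfolding N_def using nn r
    by (intro mult_left_mono add_mono order_refl suminf_le nn_integral_near_potential_le)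
      (auto intro: upper_truncation_nonneg)
  also have "\<dots> = ennreal (K powr p) * (emeasure lborel T + (\<Sum>k. ennreal (3 * 2 powr ((real k + 1) * p - real k) * (near_const DIM('a) * r k))
      * (\<integral>\<^sup>+y. ennreal (upper_truncation \<rho> (2 powr real k / (3 * near_const DIM('a) * r k)) y) \<partial>lborel)))"
    unfolding c_def using r near_const_pos[of "DIM('a)"]
    by (simp add: ennreal_mult less_imp_le ac_simps)
  finally show ?thesis .
qed

lemma nn_integral_geometric_level_sum:
  fixes \<rho> :: "'a \<Rightarrow> real"
  assumes rho [measurable]: "\<rho> \<in> borel_measurable M" and nn: "\<forall>y. 0 \<le> \<rho> y"
  shows "(\<integral>\<^sup>+y. geometric_level_sum b a B (\<rho> y) \<partial>M)
    = (\<Sum>k. ennreal ((b^k) powr a) * (\<integral>\<^sup>+y. ennreal (upper_truncation \<rho> (B * b^k) y) \<partial>M))"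
proof -
  have "(\<integral>\<^sup>+y. geometric_level_sum b a B (\<rho> y) \<partial>M)
      = (\<integral>\<^sup>+y. (\<Sum>k. ennreal ((b^k) powr a) * ennreal (upper_truncation \<rho> (B * b^k) y)) \<partial>M)"
    unfolding geometric_level_sum_def upper_truncation_def using nn
    by (intro nn_integral_cong suminf_cong) (simp add: ennreal_mult)
  also have "\<dots> = (\<Sum>k. ennreal ((b^k) powr a) * (\<integral>\<^sup>+y. ennreal (upper_truncation \<rho> (B * b^k) y) \<partial>M))"
    by (simp add: nn_integral_suminf nn_integral_cmult)
  finally show ?thesis .
qed

lemma dyadic_scale_identities:
  fixes \<epsilon> C c q \<gamma> :: real and k :: nat
  assumes e: "\<epsilon> < 0" and C: "0 < C" and q: "q = 1 - 1 / \<epsilon>"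
  defines "r \<equiv> (3 * C) powr (-1 / \<epsilon>) * 2 powr (real k / \<epsilon>)"
  shows "C * r powr \<epsilon> = 2 powr real k / 3"
    and "3 * 2 powr ((real k + 1) * (\<gamma> * q) - real k) * (c * r)
           = 3 * c * (3 * C) powr (-1 / \<epsilon>) * 2 powr (\<gamma> * q) * ((2 powr q) ^ k) powr (\<gamma> - 1)"
    and "2 powr real k / (3 * c * r) = 1 / (3 * c * (3 * C) powr (-1 / \<epsilon>)) * (2 powr q) ^ k"
proof -
  have "r powr \<epsilon> = (3 * C) powr (-1 / \<epsilon> * \<epsilon>) * 2 powr (real k / \<epsilon> * \<epsilon>)"
    unfolding r_def using C by (simp add: powr_mult powr_powr)
  also have "\<dots> = 2 powr real k / (3 * C)" using e C by (simp add: powr_minus_divide)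
  finally show "C * r powr \<epsilon> = 2 powr real k / 3" using C by simp
  have "(real k + 1) * (\<gamma> * q) - real k + real k / \<epsilon> = \<gamma> * q + real k * q * (\<gamma> - 1)"
    unfolding q using e by (simp add: field_simps)
  hence "2 powr ((real k + 1) * (\<gamma> * q) - real k) * 2 powr (real k / \<epsilon>)
      = 2 powr (\<gamma> * q) * ((2 powr q) ^ k) powr (\<gamma> - 1)"
    by (simp add: powr_add[symmetric] powr_power powr_powr)
  thus "3 * 2 powr ((real k + 1) * (\<gamma> * q) - real k) * (c * r)
      = 3 * c * (3 * C) powr (-1 / \<epsilon>) * 2 powr (\<gamma> * q) * ((2 powr q) ^ k) powr (\<gamma> - 1)"
    unfolding r_def by (simp add: ac_simps)
  have "real k - real k / \<epsilon> = real k * q" unfolding q by (simp add: algebra_simps)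
  hence "2 powr real k / 2 powr (real k / \<epsilon>) = (2 powr q) ^ k"
    by (simp add: powr_diff[symmetric] powr_power mult.commute)
  thus "2 powr real k / (3 * c * r) = 1 / (3 * c * (3 * C) powr (-1 / \<epsilon>)) * (2 powr q) ^ k"
    unfolding r_def by (simp add: field_simps)
qed

lemma nn_integral_dominated_powr_le_level_sum:
  fixes \<beta> \<gamma> q :: real
  assumes eps: "\<beta> + 1 - real DIM('a::euclidean_space) < 0" and \<gamma>: "0 < \<gamma>"
    and q: "q = 1 - 1 / (\<beta> + 1 - real DIM('a))"
  obtains A B where "0 \<le> A" and "0 < B" and
    "\<And>(\<rho> :: 'a \<Rightarrow> real) F K T. \<rho> \<in> borel_measurable lborel \<Longrightarrow> \<forall>y. 0 \<le> \<rho> y \<Longrightarrow>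
       integrable lborel \<rho> \<Longrightarrow> T \<in> sets lborel \<Longrightarrow> 0 \<le> K \<Longrightarrow> (\<And>x. F x \<le> ennreal K * I1 \<rho> x) \<Longrightarrow>
       (\<integral>\<^sup>+x\<in>T \<inter> morrey_set \<rho> \<beta>. ennreal (enn2real (F x) powr (\<gamma> * q)) \<partial>lborel)
         \<le> ennreal (K powr (\<gamma> * q)) *
           (emeasure lborel T + ennreal A * (\<integral>\<^sup>+y. geometric_level_sum (2 powr q) (\<gamma> - 1) B (\<rho> y) \<partial>lborel))"
proof -
  define \<epsilon> where "\<epsilon> = \<beta> + 1 - real DIM('a)"
  define c where "c = near_const DIM('a)"
  define C where "C = far_const DIM('a) \<beta>"
  define cc where "cc = (3 * C) powr (-1 / \<epsilon>)"
  define r where "r k = cc * 2 powr (real k / \<epsilon>)" for k :: nat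
  define A where "A = 3 * c * cc * 2 powr (\<gamma> * q)"
  define B where "B = 1 / (3 * c * cc)"
  have e: "\<epsilon> < 0" and q': "q = 1 - 1 / \<epsilon>" unfolding \<epsilon>_def using eps q by auto
  have c: "0 < c" unfolding c_def by (rule near_const_pos)
  have C: "0 < C" unfolding C_def using eps by (rule far_const_pos)
  have cc: "0 < cc" unfolding cc_def using C by simp
  have r: "0 < r k" for k unfolding r_def using cc by simp
  have p: "0 < \<gamma> * q" unfolding q' using e \<gamma> by (simp add: field_simps)
  note scales = dyadic_scale_identities[OF e C q', folded cc_def r_def]
  show thesis
  proof (rule that)
    show "0 \<le> A" unfolding A_def using c cc by simp
    show "0 < B" unfolding B_def using c cc by simp
    fix \<rho> :: "'a \<Rightarrow> real" and F :: "'a \<Rightarrow> ennreal" and K :: real and T :: "'a set"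
    assume rho: "\<rho> \<in> borel_measurable lborel" and nn: "\<forall>y. 0 \<le> \<rho> y" and int: "integrable lborel \<rho>"
      and T: "T \<in> sets lborel" and K: "0 \<le> K" and dom: "\<And>x. F x \<le> ennreal K * I1 \<rho> x"
    have "(\<integral>\<^sup>+x\<in>T \<inter> morrey_set \<rho> \<beta>. ennreal (enn2real (F x) powr (\<gamma> * q)) \<partial>lborel)
        \<le> ennreal (K powr (\<gamma> * q)) * (emeasure lborel T + (\<Sum>k. ennreal (A * ((2 powr q)^k) powr (\<gamma> - 1))
             * (\<integral>\<^sup>+y. ennreal (upper_truncation \<rho> (B * (2 powr q)^k) y) \<partial>lborel)))"
      using nn_integral_dominated_powr_le_sum[OF rho nn int eps p r scales(1)[unfolded C_def \<epsilon>_def] T K dom]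
      unfolding scales(2,3)[unfolded c_def] A_def B_def c_def .
    also have "(\<Sum>k. ennreal (A * ((2 powr q)^k) powr (\<gamma> - 1))
        * (\<integral>\<^sup>+y. ennreal (upper_truncation \<rho> (B * (2 powr q)^k) y) \<partial>lborel))
        = ennreal A * (\<integral>\<^sup>+y. geometric_level_sum (2 powr q) (\<gamma> - 1) B (\<rho> y) \<partial>lborel)"
      using \<open>0 \<le> A\<close> rho nn
      by (simp add: nn_integral_geometric_level_sum ennreal_mult ennreal_suminf_cmult mult.assoc)
    finally show "(\<integral>\<^sup>+x\<in>T \<inter> morrey_set \<rho> \<beta>. ennreal (enn2real (F x) powr (\<gamma> * q)) \<partial>lborel)
        \<le> ennreal (K powr (\<gamma> * q)) *
          (emeasure lborel T + ennreal A * (\<integral>\<^sup>+y. geometric_level_sum (2 powr q) (\<gamma> - 1) B (\<rho> y) \<partial>lborel))" .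
  qed
qed

lemma nn_integral_geometric_level_sum_le_powr:
  fixes b a B :: real and \<rho> :: "'a \<Rightarrow> real"
  assumes b: "1 < b" and a: "0 < a" and B: "0 < B" and nn: "\<forall>x. 0 \<le> \<rho> x"
    and int: "integrable M (\<lambda>x. \<rho> x powr (1 + a))"
  shows "(\<integral>\<^sup>+y. geometric_level_sum b a B (\<rho> y) \<partial>M)
    \<le> ennreal (b powr a / (b powr a - 1) * B powr (-a) * (\<integral>x. \<rho> x powr (1 + a) \<partial>M))"
proof -
  define C where "C = b powr a / (b powr a - 1) * B powr (-a)"
  have "1 < b powr a" using powr_less_mono[OF a b] b by simp
  hence C: "0 \<le> C" unfolding C_def by simp
  have "(\<integral>\<^sup>+y. geometric_level_sum b a B (\<rho> y) \<partial>M) \<le> (\<integral>\<^sup>+y. ennreal (C * \<rho> y powr (1 + a)) \<partial>M)"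
    unfolding C_def using nn by (intro nn_integral_mono geometric_level_sum_le_powr b a B) auto
  also have "\<dots> = ennreal (C * (\<integral>x. \<rho> x powr (1 + a) \<partial>M))"
    using int C by (subst nn_integral_eq_integral) auto
  finally show ?thesis unfolding C_def .
qed

lemma nn_integral_geometric_level_sum_zero_le:
  fixes b B :: real and \<rho> :: "'a \<Rightarrow> real"
  assumes b: "1 < b" and B: "0 < B" and nn: "\<forall>x. 0 \<le> \<rho> x"
    and int: "integrable M \<rho>" and intl: "integrable M (\<lambda>x. \<rho> x * ln (1 + \<rho> x))"
  shows "(\<integral>\<^sup>+y. geometric_level_sum b 0 B (\<rho> y) \<partial>M)
    \<le> ennreal ((1 + \<bar>ln B\<bar> / ln b) * (\<integral>x. \<rho> x \<partial>M) + (\<integral>x. \<rho> x * ln (1 + \<rho> x) \<partial>M) / ln b)"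
proof -
  have "(\<integral>\<^sup>+y. geometric_level_sum b 0 B (\<rho> y) \<partial>M)
      \<le> (\<integral>\<^sup>+y. ennreal ((1 + \<bar>ln B\<bar> / ln b) * \<rho> y + \<rho> y * ln (1 + \<rho> y) / ln b) \<partial>M)"
    using nn by (intro nn_integral_mono geometric_level_sum_zero_le b B) auto
  also have "\<dots> = ennreal ((1 + \<bar>ln B\<bar> / ln b) * (\<integral>x. \<rho> x \<partial>M) + (\<integral>x. \<rho> x * ln (1 + \<rho> x) \<partial>M) / ln b)"
    using int intl nn b by (subst nn_integral_eq_integral) auto
  finally show ?thesis .
qed

definition level_sum_bound :: "real \<Rightarrow> real \<Rightarrow> real \<Rightarrow> real \<Rightarrow> real" where
  "level_sum_bound b B \<gamma> C0 =
     (if \<gamma> > 1 then b powr (\<gamma> - 1) / (b powr (\<gamma> - 1) - 1) * B powr (-(\<gamma> - 1)) * \<bar>C0\<bar> powr \<gamma>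
      else (1 + (\<bar>ln B\<bar> + 1) / ln b) * \<bar>C0\<bar>)"

lemma level_sum_bound_nonneg:
  assumes "1 < b" shows "0 \<le> level_sum_bound b B \<gamma> C0"
proof (cases "1 < \<gamma>")
  case True
  hence "1 < b powr (\<gamma> - 1)" using powr_less_mono[of 0 "\<gamma> - 1" b] assms by simp
  thus ?thesis using True unfolding level_sum_bound_def by simp
qed (use assms in \<open>simp add: level_sum_bound_def\<close>)

lemma nn_integral_geometric_level_sum_le:
  fixes b B \<gamma> C0 :: real and \<rho> :: "'a \<Rightarrow> real"
  assumes b: "1 < b" and B: "0 < B" and \<gamma>: "1 \<le> \<gamma>"
    and nn: "\<forall>x. 0 \<le> \<rho> x" and int: "integrable M \<rho>"
    and H: "if \<gamma> > 1
            then integrable M (\<lambda>x. \<rho> x powr \<gamma>) \<and>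
                 (\<integral>x. \<rho> x \<partial>M) + (\<integral>x. \<rho> x powr \<gamma> \<partial>M) powr (1 / \<gamma>) \<le> C0
            else integrable M (\<lambda>x. \<rho> x * ln (1 + \<rho> x)) \<and>
                 (\<integral>x. \<rho> x \<partial>M) + (\<integral>x. \<rho> x * ln (1 + \<rho> x) \<partial>M) \<le> C0"
  shows "(\<integral>\<^sup>+y. geometric_level_sum b (\<gamma> - 1) B (\<rho> y) \<partial>M) \<le> ennreal (level_sum_bound b B \<gamma> C0)"
proof (cases "1 < \<gamma>")
  case True
  define I where "I = (\<integral>x. \<rho> x powr \<gamma> \<partial>M)"
  have "0 \<le> (\<integral>x. \<rho> x \<partial>M)" using nn by simp
  hence "I powr (1 / \<gamma>) \<le> \<bar>C0\<bar>" using H True abs_ge_self[of C0] unfolding I_def by (simp; linarith)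
  hence "(I powr (1 / \<gamma>)) powr \<gamma> \<le> \<bar>C0\<bar> powr \<gamma>" using True by (intro powr_mono2) auto
  hence I: "I \<le> \<bar>C0\<bar> powr \<gamma>" using True unfolding I_def by (simp add: powr_powr)
  have "1 < b powr (\<gamma> - 1)" using powr_less_mono[of 0 "\<gamma> - 1" b] b True by simp
  hence "0 \<le> b powr (\<gamma> - 1) / (b powr (\<gamma> - 1) - 1) * B powr (-(\<gamma> - 1))" by simp
  from mult_left_mono[OF I this]
  have bound: "b powr (\<gamma> - 1) / (b powr (\<gamma> - 1) - 1) * B powr (-(\<gamma> - 1)) * I \<le> level_sum_bound b B \<gamma> C0"
    using True unfolding level_sum_bound_def by simp
  have intg: "integrable M (\<lambda>x. \<rho> x powr (1 + (\<gamma> - 1)))" using H True by simp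
  have "(\<integral>\<^sup>+y. geometric_level_sum b (\<gamma> - 1) B (\<rho> y) \<partial>M)
      \<le> ennreal (b powr (\<gamma> - 1) / (b powr (\<gamma> - 1) - 1) * B powr (-(\<gamma> - 1)) * I)"
    using nn_integral_geometric_level_sum_le_powr[OF b _ B nn intg] True unfolding I_def by simp
  also have "\<dots> \<le> ennreal (level_sum_bound b B \<gamma> C0)" using bound by (rule ennreal_leI)
  finally show ?thesis .
next
  case False
  hence \<gamma>1: "\<gamma> = 1" using \<gamma> by simp
  have intl: "integrable M (\<lambda>x. \<rho> x * ln (1 + \<rho> x))" using H False by simp
  define X where "X = (\<integral>x. \<rho> x \<partial>M)"
  define Y where "Y = (\<integral>x. \<rho> x * ln (1 + \<rho> x) \<partial>M)"
  have "0 \<le> X" "0 \<le> Y" using nn unfolding X_def Y_def by auto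
  moreover have "X + Y \<le> C0" using H False unfolding X_def Y_def by simp
  ultimately have XY: "X \<le> \<bar>C0\<bar>" "Y \<le> \<bar>C0\<bar>" by linarith+
  have lb: "0 < ln b" using b by simp
  have "(1 + \<bar>ln B\<bar> / ln b) * X + Y / ln b \<le> (1 + \<bar>ln B\<bar> / ln b) * \<bar>C0\<bar> + \<bar>C0\<bar> / ln b"
    using XY lb by (intro add_mono mult_left_mono divide_right_mono) auto
  also have "\<dots> = level_sum_bound b B \<gamma> C0"
    using False lb unfolding level_sum_bound_def by (simp add: field_simps)
  finally have "ennreal ((1 + \<bar>ln B\<bar> / ln b) * X + Y / ln b) \<le> ennreal (level_sum_bound b B \<gamma> C0)"
    by (rule ennreal_leI)
  with nn_integral_geometric_level_sum_zero_le[OF b B nn int intl] show ?thesis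
    unfolding \<gamma>1 X_def Y_def by simp
qed

lemma Lp_exponent_gt_dim:
  fixes N \<gamma> \<alpha> :: real
  assumes dim: "N = 2 \<or> N = 3" and g1: "1 \<le> \<gamma>" and g2: "\<gamma> \<le> N / 2"
    and a1: "0 < \<alpha>" and ga: "gamma_n N \<gamma> - N + 1 + \<alpha> < 0"
  shows "N < \<gamma> * (gamma_n N \<gamma> - N + \<alpha>) / (gamma_n N \<gamma> - N + 1 + \<alpha>)"
proof -
  define \<epsilon> where "\<epsilon> = gamma_n N \<gamma> - N + 1 + \<alpha>"
  have e: "\<epsilon> < 0" using ga unfolding \<epsilon>_def .
  have key: "\<gamma> * (\<epsilon> - 1) < N * \<epsilon>"
    using dim
  proof
    assume N: "N = 2"
    hence "\<gamma> = 1" using g1 g2 by simp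
    thus ?thesis unfolding \<epsilon>_def using N a1 by (simp add: gamma_n_def)
  next
    assume N: "N = 3"
    have g3: "0 < 3 - \<gamma>" using g2 N by simp
    have "gamma_n N \<gamma> * (3 - \<gamma>) = 6 - 3 * \<gamma>" using N g3 by (simp add: gamma_n_def field_simps)
    hence "\<epsilon> * (\<gamma> - 3) = \<gamma> - \<alpha> * (3 - \<gamma>)" unfolding \<epsilon>_def using N by (simp add: algebra_simps)
    moreover have "0 < \<alpha> * (3 - \<gamma>)" using a1 g3 by simp
    ultimately show ?thesis using N by (simp add: algebra_simps)
  qed
  have "gamma_n N \<gamma> - N + \<alpha> = \<epsilon> - 1" unfolding \<epsilon>_def by simp
  thus ?thesis unfolding \<epsilon>_def[symmetric] using key e by (simp add: neg_less_divide_eq)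
qed

lemma smooth_fun_compact_support_bounded:
  fixes \<psi> :: "'a::euclidean_space \<Rightarrow> real"
  assumes sm: "smooth_fun \<psi>" and supp: "bounded (closure {x. \<psi> x \<noteq> 0})"
  obtains K where "0 \<le> K" and "\<And>x. \<bar>\<psi> x\<bar> \<le> K"
proof -
  define S where "S = closure {x. \<psi> x \<noteq> 0}"
  have "\<forall>x. \<psi> differentiable (at x)" using sm by (cases rule: smooth_fun.cases) auto
  hence "continuous_on S \<psi>"
    by (simp add: continuous_at_imp_continuous_on differentiable_imp_continuous_within)
  moreover have "compact S" unfolding S_def using supp by (simp add: compact_eq_bounded_closed)
  ultimately have "bounded (\<psi> ` S)" by (intro compact_imp_bounded compact_continuous_image)
  then obtain K where K: "\<forall>y\<in>\<psi> ` S. norm y \<le> K" unfolding bounded_iff by blast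
  show thesis
  proof (rule that[of "max 0 K"])
    fix x
    show "\<bar>\<psi> x\<bar> \<le> max 0 K"
    proof (cases "x \<in> S")
      case False
      hence "\<psi> x = 0" using closure_subset[of "{x. \<psi> x \<noteq> 0}"] unfolding S_def by auto
      thus ?thesis by simp
    qed (use K in fastforce)
  qed simp
qed

lemma I1_mult_le:
  fixes \<psi> \<rho> :: "'a::euclidean_space \<Rightarrow> real"
  assumes rho: "\<rho> \<in> borel_measurable lborel" and nn: "\<forall>y. 0 \<le> \<rho> y" and K: "0 \<le> K" and le: "\<And>y. \<psi> y \<le> K"
  shows "I1 (\<lambda>y. \<psi> y * \<rho> y) x \<le> ennreal K * I1 \<rho> x"
proof -
  have "I1 (\<lambda>y. \<psi> y * \<rho> y) x \<le> (\<integral>\<^sup>+y. ennreal K * ennreal (norm (x - y) powr (1 - real DIM('a)) * \<rho> y) \<partial>lborel)"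
    unfolding I1_def
  proof (rule nn_integral_mono)
    fix y
    have "\<psi> y * \<rho> y \<le> K * \<rho> y" using le nn by (intro mult_right_mono) auto
    hence "norm (x - y) powr (1 - real DIM('a)) * (\<psi> y * \<rho> y) \<le> norm (x - y) powr (1 - real DIM('a)) * (K * \<rho> y)"
      by (rule mult_left_mono) simp
    thus "ennreal (norm (x - y) powr (1 - real DIM('a)) * (\<psi> y * \<rho> y))
        \<le> ennreal K * ennreal (norm (x - y) powr (1 - real DIM('a)) * \<rho> y)"
      using K nn by (simp add: ennreal_mult[symmetric] ennreal_leI ac_simps)
  qed
  also have "\<dots> = ennreal K * I1 \<rho> x" unfolding I1_def using rho by (intro nn_integral_cmult) simp
  finally show ?thesis .
qed

lemma Lp_norm_on_le:
  fixes f :: "'a::euclidean_space \<Rightarrow> ennreal" and S :: "'a set" and p J :: real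
  assumes p: "0 < p" and J: "0 \<le> J" and fin: "AE x in lborel. x \<in> S \<longrightarrow> f x < \<infinity>"
    and int: "(\<integral>\<^sup>+x\<in>S. ennreal (enn2real (f x) powr p) \<partial>lborel) \<le> ennreal J"
  shows "Lp_norm_on S p f \<le> ennreal (J powr (1 / p))"
proof -
  define I where "I = (\<integral>\<^sup>+x\<in>S. ennreal (enn2real (f x) powr p) \<partial>lborel)"
  have "I < \<infinity>" using int unfolding I_def by (simp add: le_less_trans)
  hence "Lp_norm_on S p f = ennreal (enn2real I powr (1 / p))"
    using fin unfolding Lp_norm_on_def I_def Let_def by simp
  also have "\<dots> \<le> ennreal (J powr (1 / p))"
    using int J p unfolding I_def by (intro ennreal_leI powr_mono2 enn2real_leI) auto
  finally show ?thesis .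
qed

lemma Lp_norm_on_dominated_morrey_le:
  fixes \<beta> \<gamma> q :: real
  assumes eps: "\<beta> + 1 - real DIM('a::euclidean_space) < 0" and \<gamma>: "0 < \<gamma>"
    and q: "q = 1 - 1 / (\<beta> + 1 - real DIM('a))"
  obtains B A where "0 < B" and
    "\<And>(\<rho> :: 'a \<Rightarrow> real) F K R G. \<rho> \<in> borel_measurable lborel \<Longrightarrow> \<forall>y. 0 \<le> \<rho> y \<Longrightarrow>
       integrable lborel \<rho> \<Longrightarrow> 0 \<le> K \<Longrightarrow> \<forall>x. F x \<le> ennreal K * I1 \<rho> x \<Longrightarrow> 0 \<le> G \<Longrightarrow>
       (\<integral>\<^sup>+y. geometric_level_sum (2 powr q) (\<gamma> - 1) B (\<rho> y) \<partial>lborel) \<le> ennreal G \<Longrightarrow>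
       Lp_norm_on (ball 0 R \<inter> morrey_set \<rho> \<beta>) (\<gamma> * q) F
         \<le> ennreal ((K powr (\<gamma> * q) * (unit_ball_vol (real DIM('a)) * \<bar>R\<bar> ^ DIM('a) + A * G)) powr (1 / (\<gamma> * q)))"
proof -
  obtain A B where A: "0 \<le> A" and B: "0 < B" and bound:
    "\<And>(\<rho> :: 'a \<Rightarrow> real) F K T. \<rho> \<in> borel_measurable lborel \<Longrightarrow> \<forall>y. 0 \<le> \<rho> y \<Longrightarrow>
       integrable lborel \<rho> \<Longrightarrow> T \<in> sets lborel \<Longrightarrow> 0 \<le> K \<Longrightarrow> (\<And>x. F x \<le> ennreal K * I1 \<rho> x) \<Longrightarrow>
       (\<integral>\<^sup>+x\<in>T \<inter> morrey_set \<rho> \<beta>. ennreal (enn2real (F x) powr (\<gamma> * q)) \<partial>lborel)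
         \<le> ennreal (K powr (\<gamma> * q)) *
           (emeasure lborel T + ennreal A * (\<integral>\<^sup>+y. geometric_level_sum (2 powr q) (\<gamma> - 1) B (\<rho> y) \<partial>lborel))"
    using nn_integral_dominated_powr_le_level_sum[OF eps \<gamma> q] by blast
  have p: "0 < \<gamma> * q" using \<gamma> eps unfolding q by (simp add: field_simps)
  show thesis
  proof (rule that[OF B])
    fix \<rho> :: "'a \<Rightarrow> real" and F :: "'a \<Rightarrow> ennreal" and K R G :: real
    assume rho: "\<rho> \<in> borel_measurable lborel" and nn: "\<forall>y. 0 \<le> \<rho> y" and int: "integrable lborel \<rho>"
      and K: "0 \<le> K" and dom: "\<forall>x. F x \<le> ennreal K * I1 \<rho> x" and G: "0 \<le> G"
      and level: "(\<integral>\<^sup>+y. geometric_level_sum (2 powr q) (\<gamma> - 1) B (\<rho> y) \<partial>lborel) \<le> ennreal G"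
    define V where "V = unit_ball_vol (real DIM('a)) * \<bar>R\<bar> ^ DIM('a)"
    have "emeasure lborel (ball (0::'a) R) \<le> emeasure lborel (ball (0::'a) \<bar>R\<bar>)"
      by (intro emeasure_mono) auto
    also have "\<dots> = ennreal V" unfolding V_def by (rule emeasure_ball) simp
    finally have ball: "emeasure lborel (ball (0::'a) R) \<le> ennreal V" .
    have V: "0 \<le> V" unfolding V_def by simp
    have "AE x in lborel. x \<in> ball 0 R \<inter> morrey_set \<rho> \<beta> \<longrightarrow> F x < \<infinity>"
      using AE_I1_finite_on_morrey_set[OF rho nn int eps]
      by eventually_elim (auto intro: le_less_trans[OF dom[rule_format]] simp: ennreal_mult_less_top)
    moreover have "(\<integral>\<^sup>+x\<in>ball 0 R \<inter> morrey_set \<rho> \<beta>. ennreal (enn2real (F x) powr (\<gamma> * q)) \<partial>lborel)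
        \<le> ennreal (K powr (\<gamma> * q) * (V + A * G))"
    proof -
      have "(\<integral>\<^sup>+x\<in>ball 0 R \<inter> morrey_set \<rho> \<beta>. ennreal (enn2real (F x) powr (\<gamma> * q)) \<partial>lborel)
          \<le> ennreal (K powr (\<gamma> * q)) * (emeasure lborel (ball (0::'a) R)
            + ennreal A * (\<integral>\<^sup>+y. geometric_level_sum (2 powr q) (\<gamma> - 1) B (\<rho> y) \<partial>lborel))"
        by (rule bound[OF rho nn int _ K dom[rule_format]]) simp
      also have "\<dots> \<le> ennreal (K powr (\<gamma> * q)) * (ennreal V + ennreal A * ennreal G)"
        using ball level by (intro mult_left_mono add_mono) auto
      also have "\<dots> = ennreal (K powr (\<gamma> * q) * (V + A * G))"
        using A G V by (simp add: ennreal_mult ennreal_plus)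
      finally show ?thesis .
    qed
    ultimately show "Lp_norm_on (ball 0 R \<inter> morrey_set \<rho> \<beta>) (\<gamma> * q) F
        \<le> ennreal ((K powr (\<gamma> * q) * (V + A * G)) powr (1 / (\<gamma> * q)))"
      using A G V by (intro Lp_norm_on_le p) auto
  qed
qed

lemma Lp_norm_on_morrey_set_bounded:
  fixes \<beta> \<gamma> q K R C0 :: real and F :: "('a::euclidean_space \<Rightarrow> real) \<Rightarrow> 'a \<Rightarrow> ennreal"
  assumes eps: "\<beta> + 1 - real DIM('a) < 0" and \<gamma>: "1 \<le> \<gamma>" and q: "q = 1 - 1 / (\<beta> + 1 - real DIM('a))"
    and K: "0 \<le> K"
    and dom: "\<And>\<rho>. \<rho> \<in> borel_measurable lborel \<Longrightarrow> \<forall>y. 0 \<le> \<rho> y \<Longrightarrow> \<forall>x. F \<rho> x \<le> ennreal K * I1 \<rho> x"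
  shows "\<exists>C. \<forall>\<rho>. \<rho> \<in> borel_measurable lborel \<and> (\<forall>x. 0 \<le> \<rho> x) \<and> integrable lborel \<rho> \<and>
           (if \<gamma> > 1
            then integrable lborel (\<lambda>x. \<rho> x powr \<gamma>) \<and>
                 (\<integral>x. \<rho> x \<partial>lborel) + (\<integral>x. \<rho> x powr \<gamma> \<partial>lborel) powr (1 / \<gamma>) \<le> C0
            else integrable lborel (\<lambda>x. \<rho> x * ln (1 + \<rho> x)) \<and>
                 (\<integral>x. \<rho> x \<partial>lborel) + (\<integral>x. \<rho> x * ln (1 + \<rho> x) \<partial>lborel) \<le> C0)
           \<longrightarrow> Lp_norm_on (ball 0 R \<inter> morrey_set \<rho> \<beta>) (\<gamma> * q) (F \<rho>) \<le> ennreal C"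
proof -
  have "0 < \<gamma>" using \<gamma> by simp
  then obtain B A where B: "0 < B" and Lp: "\<And>(\<rho> :: 'a \<Rightarrow> real) F K R G. \<rho> \<in> borel_measurable lborel \<Longrightarrow>
       \<forall>y. 0 \<le> \<rho> y \<Longrightarrow> integrable lborel \<rho> \<Longrightarrow> 0 \<le> K \<Longrightarrow> \<forall>x. F x \<le> ennreal K * I1 \<rho> x \<Longrightarrow> 0 \<le> G \<Longrightarrow>
       (\<integral>\<^sup>+y. geometric_level_sum (2 powr q) (\<gamma> - 1) B (\<rho> y) \<partial>lborel) \<le> ennreal G \<Longrightarrow>
       Lp_norm_on (ball 0 R \<inter> morrey_set \<rho> \<beta>) (\<gamma> * q) F
         \<le> ennreal ((K powr (\<gamma> * q) * (unit_ball_vol (real DIM('a)) * \<bar>R\<bar> ^ DIM('a) + A * G)) powr (1 / (\<gamma> * q)))"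
    using Lp_norm_on_dominated_morrey_le[OF eps _ q] by metis
  have b: "1 < 2 powr q" using eps unfolding q by (simp add: field_simps)
  show ?thesis
    by (intro exI allI impI, elim conjE, rule Lp[OF _ _ _ K dom level_sum_bound_nonneg[OF b]
        nn_integral_geometric_level_sum_le[OF b B \<gamma>]])
qed

theorem lemma3p2:
  fixes \<gamma> \<alpha> C0 R :: real and \<psi> :: "'a::euclidean_space \<Rightarrow> real"
  assumes dim: "DIM('a) = 2 \<or> DIM('a) = 3"
    and g1: "1 \<le> \<gamma>" and g2: "\<gamma> \<le> real DIM('a) / 2"
    and a1: "0 < \<alpha>" and a2: "\<alpha> < 1"
    and ga: "gamma_n (real DIM('a)) \<gamma> - real DIM('a) + 1 + \<alpha> < 0"
    and psi_smooth: "smooth_fun \<psi>"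
    and psi_nonneg: "\<forall>x. 0 \<le> \<psi> x"
    and psi_supp: "closure {x. \<psi> x \<noteq> 0} \<subseteq> ball 0 R"
  shows "(let p = \<gamma> * (gamma_n (real DIM('a)) \<gamma> - real DIM('a) + \<alpha>)
                   / (gamma_n (real DIM('a)) \<gamma> - real DIM('a) + 1 + \<alpha>)
          in p > real DIM('a) \<and>
             (\<exists>C::real. \<forall>\<rho> :: 'a \<Rightarrow> real.
                \<rho> \<in> borel_measurable lborel \<and> (\<forall>x. 0 \<le> \<rho> x) \<and>
                integrable lborel \<rho> \<and>
                (if \<gamma> > 1
                 then integrable lborel (\<lambda>x. \<rho> x powr \<gamma>) \<and>
                      (\<integral>x. \<rho> x \<partial>lborel) + (\<integral>x. \<rho> x powr \<gamma> \<partial>lborel) powr (1 / \<gamma>) \<le> C0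
                 else integrable lborel (\<lambda>x. \<rho> x * ln (1 + \<rho> x)) \<and>
                      (\<integral>x. \<rho> x \<partial>lborel) + (\<integral>x. \<rho> x * ln (1 + \<rho> x) \<partial>lborel) \<le> C0)
                \<longrightarrow>
                Lp_norm_on {x \<in> ball 0 R. \<forall>s \<ge> 0.
                              maxM \<rho> s x \<le> ennreal (s powr (gamma_n (real DIM('a)) \<gamma> + \<alpha>))}
                           p (I1 (\<lambda>y. \<psi> y * \<rho> y))
                  \<le> ennreal C))"
proof -
  define \<beta> where "\<beta> = gamma_n (real DIM('a)) \<gamma> + \<alpha>"
  define q where "q = 1 - 1 / (\<beta> + 1 - real DIM('a))"
  have eps: "\<beta> + 1 - real DIM('a) < 0" using ga unfolding \<beta>_def by simp
  have p: "\<gamma> * (gamma_n (real DIM('a)) \<gamma> - real DIM('a) + \<alpha>) / (gamma_n (real DIM('a)) \<gamma> - real DIM('a) + 1 + \<alpha>)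
      = \<gamma> * q"
    using eps unfolding q_def \<beta>_def by (simp add: field_simps)
  have "real DIM('a) = 2 \<or> real DIM('a) = 3" using dim by auto
  hence "real DIM('a) < \<gamma> * q" using Lp_exponent_gt_dim[OF _ g1 g2 a1 ga] p by simp
  moreover obtain K where K: "0 \<le> K" "\<And>x. \<bar>\<psi> x\<bar> \<le> K"
    using smooth_fun_compact_support_bounded[OF psi_smooth bounded_subset[OF bounded_ball psi_supp]] by blast
  have "\<forall>x. I1 (\<lambda>y. \<psi> y * \<rho> y) x \<le> ennreal K * I1 \<rho> x"
    if "\<rho> \<in> borel_measurable lborel" and "\<forall>y. 0 \<le> \<rho> y" for \<rho> :: "'a \<Rightarrow> real"
    using I1_mult_le[OF that K(1)] K(2) by (simp add: abs_le_iff)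
  note bounded = Lp_norm_on_morrey_set_bounded[OF eps g1 q_def K(1) this, of C0 R]
  have \<Omega>: "{x \<in> ball 0 R. \<forall>s\<ge>0. maxM \<rho> s x \<le> ennreal (s powr \<beta>)} = ball 0 R \<inter> morrey_set \<rho> \<beta>"
    for \<rho> :: "'a \<Rightarrow> real" by (auto simp: morrey_set_def)
  ultimately show ?thesis using bounded unfolding Let_def p \<beta>_def[symmetric] \<Omega> by blast
qed

end
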